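(* For a nonzero real sequence $(\lambda_i)_{i\ge 0}$, let $\mathcal{H}_\lambda=\{\sum_i a_ix^i\in\mathbb{R}[x]:\sum_i a_i\lambda_i=0\}$. Among such hyperplanes with $\lambda_0=0$ and $\lambda_1\neq 0$, the ones that are closed under multiplication are exactly the following: (1) $\mathcal{H}_{\beta,\gamma}=\{p\in\mathbb{R}[x]: p(\beta)=p(\gamma)\}$ for real numbers $\beta\neq\gamma$; (2) $\mathcal{H}_\delta=\{p\in\mathbb{R}[x]: p'(\delta)=0\}$ for $\delta\in\mathbb{R}$; (3) $\mathcal{H}_{z,\bar z}=\{p\in\mathbb{R}[x]: p(z)=p(\bar z)\}=\{p\in\mathbb{R}[x]:\operatorname{Im}p(z)=0\}$ for $z\in\mathbb{C}\setminus\mathbb{R}$. *)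

theory Defs
  imports "HOL-Computational_Algebra.Polynomial" Complex_Main
begin

definition hyperplane :: "(nat \<Rightarrow> real) \<Rightarrow> real poly set" where
  "hyperplane lam = {p. (\<Sum>i\<le>degree p. coeff p i * lam i) = 0}"

definition mult_closed :: "real poly set \<Rightarrow> bool" where
  "mult_closed H \<longleftrightarrow> (\<forall>p\<in>H. \<forall>q\<in>H. p * q \<in> H)"

definition H_two_points :: "real \<Rightarrow> real \<Rightarrow> real poly set" where
  "H_two_points \<beta> \<gamma> = {p. poly p \<beta> = poly p \<gamma>}"

definition H_deriv :: "real \<Rightarrow> real poly set" where
  "H_deriv \<delta> = {p. poly (pderiv p) \<delta> = 0}"

definition H_conj :: "complex \<Rightarrow> real poly set" where
  "H_conj z = {p. poly (map_poly complex_of_real p) z = poly (map_poly complex_of_real p) (cnj z)}"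

end

theory Submission
  imports Defs
begin

text \<open>Normalise \<open>\<lambda> 1 = 1\<close>. Then \<open>X^n - \<lambda> n X\<close> lies in the hyperplane for every \<open>n\<close>,
  and applying multiplicativity to \<open>(X^n - \<lambda> n X) (X^2 - \<lambda> 2 X)\<close> yields the recurrence
  \<open>\<lambda> (n + 2) = s \<lambda> (n + 1) + t \<lambda> n\<close> with \<open>s = \<lambda> 2\<close> and \<open>t = \<lambda> 3 - \<lambda> 2^2\<close>. With
  \<open>\<lambda> 0 = 0\<close> and \<open>\<lambda> 1 = 1\<close> it determines \<open>\<lambda>\<close>, and the roots of \<open>x^2 - s x - t\<close> give the
  closed form: \<open>(\<beta>^n - \<gamma>^n) / (\<beta> - \<gamma>)\<close> for distinct real roots, \<open>n \<delta>^(n - 1)\<close> for a double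
  root, \<open>Im (z^n) / Im z\<close> for non-real roots. Pairing with these sequences is \<open>(p \<beta> - p \<gamma>) / (\<beta> - \<gamma>)\<close>,
  \<open>p' \<delta>\<close> and \<open>Im (p z) / Im z\<close> respectively.\<close>

definition coeff_pairing :: "(nat \<Rightarrow> real) \<Rightarrow> real poly \<Rightarrow> real" where
  "coeff_pairing lam p = (\<Sum>i\<le>degree p. coeff p i * lam i)"

lemma hyperplane_eq: "hyperplane lam = {p. coeff_pairing lam p = 0}"
  by (simp add: hyperplane_def coeff_pairing_def)

lemma coeff_pairing_eq_sum:
  "degree p \<le> N \<Longrightarrow> coeff_pairing lam p = (\<Sum>i\<le>N. coeff p i * lam i)"
  unfolding coeff_pairing_def by (rule sum.mono_neutral_left) (auto simp: coeff_eq_0)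

lemma coeff_pairing_add: "coeff_pairing lam (p + q) = coeff_pairing lam p + coeff_pairing lam q"
proof -
  let ?N = "max (degree p) (degree q)"
  have "coeff_pairing lam (p + q) = (\<Sum>i\<le>?N. coeff (p + q) i * lam i)"
    by (rule coeff_pairing_eq_sum) (simp add: degree_add_le)
  then show ?thesis
    using coeff_pairing_eq_sum[of p ?N lam] coeff_pairing_eq_sum[of q ?N lam]
    by (simp add: sum.distrib distrib_right)
qed

lemma coeff_pairing_minus: "coeff_pairing lam (- p) = - coeff_pairing lam p"
  by (simp add: coeff_pairing_def sum_negf)

lemma coeff_pairing_diff: "coeff_pairing lam (p - q) = coeff_pairing lam p - coeff_pairing lam q"
  using coeff_pairing_add[of lam p "- q"] by (simp add: coeff_pairing_minus)

lemma coeff_pairing_monom: "coeff_pairing lam (monom a n) = a * lam n"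
proof -
  have "coeff_pairing lam (monom a n) = (\<Sum>i\<le>n. coeff (monom a n) i * lam i)"
    by (rule coeff_pairing_eq_sum) (simp add: degree_monom_le)
  also have "\<dots> = (\<Sum>i\<le>n. if i = n then a * lam n else 0)"
    by (rule sum.cong) (auto simp: coeff_monom)
  finally show ?thesis by simp
qed

lemma hyperplane_divide:
  assumes "c \<noteq> 0"
  shows "hyperplane (\<lambda>i. lam i / c) = hyperplane lam"
  using assms by (simp add: hyperplane_eq coeff_pairing_def flip: sum_divide_distrib)

lemma coeff_pairing_power_diff:
  "coeff_pairing (\<lambda>i. (\<beta> ^ i - \<gamma> ^ i) / (\<beta> - \<gamma>)) p = (poly p \<beta> - poly p \<gamma>) / (\<beta> - \<gamma>)"
  by (simp add: coeff_pairing_def poly_altdef sum_subtractf sum_divide_distrib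
      right_diff_distrib diff_divide_distrib mult.commute)

lemma hyperplane_power_diff:
  assumes "\<beta> \<noteq> \<gamma>"
  shows "hyperplane (\<lambda>i. (\<beta> ^ i - \<gamma> ^ i) / (\<beta> - \<gamma>)) = H_two_points \<beta> \<gamma>"
  using assms by (simp add: hyperplane_eq coeff_pairing_power_diff H_two_points_def)

lemma coeff_pairing_derivative_seq:
  "coeff_pairing (\<lambda>i. of_nat i * \<delta> ^ (i - 1)) p = poly (pderiv p) \<delta>"
proof -
  let ?n = "degree p"
  have "poly (pderiv p) \<delta> = (\<Sum>i\<le>?n. coeff (pderiv p) i * \<delta> ^ i)"
    unfolding poly_altdef
    by (rule sum.mono_neutral_left) (auto simp: coeff_eq_0 degree_pderiv)
  also have "\<dots> = (\<Sum>i\<le>?n. coeff p (Suc i) * (of_nat (Suc i) * \<delta> ^ i))"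
    by (simp add: coeff_pderiv algebra_simps)
  also have "\<dots> = (\<Sum>i\<le>Suc ?n. coeff p i * (of_nat i * \<delta> ^ (i - 1)))"
    by (simp only: sum.atMost_Suc_shift) simp
  also have "\<dots> = coeff_pairing (\<lambda>i. of_nat i * \<delta> ^ (i - 1)) p"
    by (rule coeff_pairing_eq_sum[symmetric]) simp
  finally show ?thesis by simp
qed

lemma hyperplane_derivative_seq: "hyperplane (\<lambda>i. of_nat i * \<delta> ^ (i - 1)) = H_deriv \<delta>"
  using coeff_pairing_derivative_seq[of \<delta>] by (simp add: hyperplane_eq H_deriv_def)

lemma H_conj_iff_Im: "p \<in> H_conj z \<longleftrightarrow> Im (poly (map_poly complex_of_real p) z) = 0"
proof -
  have "poly (map_poly complex_of_real p) (cnj z) = cnj (poly (map_poly complex_of_real p) z)"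
    by (rule poly_cnj_real[symmetric]) (simp add: coeff_map_poly)
  then show ?thesis by (simp add: H_conj_def complex_eq_iff)
qed

lemma coeff_pairing_Im_power:
  "coeff_pairing (\<lambda>i. Im (z ^ i) / Im z) p = Im (poly (map_poly complex_of_real p) z) / Im z"
  by (simp add: coeff_pairing_def poly_altdef degree_map_poly coeff_map_poly Im_sum
      sum_divide_distrib)

lemma hyperplane_Im_power:
  assumes "z \<notin> \<real>"
  shows "hyperplane (\<lambda>i. Im (z ^ i) / Im z) = H_conj z"
  using assms by (simp add: hyperplane_eq coeff_pairing_Im_power H_conj_iff_Im complex_is_Real_iff set_eq_iff)

lemma map_poly_of_real_mult:
  "map_poly (of_real :: real \<Rightarrow> 'a :: {real_algebra_1, comm_ring}) (p * q) = map_poly of_real p * map_poly of_real q"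
  by (rule poly_eqI) (simp add: coeff_mult coeff_map_poly)

lemma mult_closed_H_two_points: "mult_closed (H_two_points \<beta> \<gamma>)"
  by (simp add: mult_closed_def H_two_points_def)

lemma mult_closed_H_deriv: "mult_closed (H_deriv \<delta>)"
  by (simp add: mult_closed_def H_deriv_def pderiv_mult)

lemma mult_closed_H_conj: "mult_closed (H_conj z)"
  by (simp add: mult_closed_def H_conj_def map_poly_of_real_mult)

lemma recurrence_eqI:
  fixes f g :: "nat \<Rightarrow> 'a :: semiring"
  assumes "f 0 = g 0" "f 1 = g 1"
    and "\<And>n. f (n + 2) = s * f (n + 1) + t * f n"
    and "\<And>n. g (n + 2) = s * g (n + 1) + t * g n"
  shows "f = g"
proof -
  have "f n = g n \<and> f (Suc n) = g (Suc n)" for n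
  proof (induction n)
    case 0
    then show ?case using assms(1,2) by simp
  next
    case (Suc n)
    then show ?case using assms(3,4)[of n] by simp
  qed
  then show ?thesis by auto
qed

lemma power_recurrence:
  fixes x :: "'a :: comm_ring_1"
  assumes "x\<^sup>2 = s * x + t"
  shows "x ^ (n + 2) = s * x ^ (n + 1) + t * x ^ n"
proof -
  have "x ^ (n + 2) = x ^ n * x\<^sup>2" by (simp only: power_add)
  then show ?thesis by (simp add: assms algebra_simps)
qed

lemma recurrence_real_roots:
  fixes \<mu> :: "nat \<Rightarrow> real"
  assumes "\<mu> 0 = 0" "\<mu> 1 = 1" and rec: "\<And>n. \<mu> (n + 2) = s * \<mu> (n + 1) + t * \<mu> n"
    and "s\<^sup>2 + 4 * t > 0"
  obtains \<beta> \<gamma> where "\<beta> \<noteq> \<gamma>" "\<mu> = (\<lambda>i. (\<beta> ^ i - \<gamma> ^ i) / (\<beta> - \<gamma>))"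
proof
  define r where "r = sqrt (s\<^sup>2 + 4 * t)"
  have r: "r\<^sup>2 = s\<^sup>2 + 4 * t" "r > 0" using assms(4) by (simp_all add: r_def)
  define \<beta> \<gamma> where "\<beta> = (s + r) / 2" and "\<gamma> = (s - r) / 2"
  have roots: "\<beta>\<^sup>2 = s * \<beta> + t" "\<gamma>\<^sup>2 = s * \<gamma> + t"
    using r(1) by (simp_all add: \<beta>_def \<gamma>_def field_simps power2_eq_square)
  have diff: "\<beta> - \<gamma> = r" by (simp add: \<beta>_def \<gamma>_def field_simps)
  then show "\<beta> \<noteq> \<gamma>" using r(2) by simp
  show "\<mu> = (\<lambda>i. (\<beta> ^ i - \<gamma> ^ i) / (\<beta> - \<gamma>))"
  proof (rule recurrence_eqI[OF _ _ rec])
    show "(\<beta> ^ (n + 2) - \<gamma> ^ (n + 2)) / (\<beta> - \<gamma>) =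
        s * ((\<beta> ^ (n + 1) - \<gamma> ^ (n + 1)) / (\<beta> - \<gamma>)) + t * ((\<beta> ^ n - \<gamma> ^ n) / (\<beta> - \<gamma>))" for n
      using power_recurrence[OF roots(1), of n] power_recurrence[OF roots(2), of n]
      by (simp add: diff_divide_distrib add_divide_distrib algebra_simps)
  qed (use assms(1,2) diff r(2) in simp_all)
qed

lemma recurrence_double_root:
  fixes \<mu> :: "nat \<Rightarrow> real"
  assumes "\<mu> 0 = 0" "\<mu> 1 = 1" and rec: "\<And>n. \<mu> (n + 2) = s * \<mu> (n + 1) + t * \<mu> n"
    and "s\<^sup>2 + 4 * t = 0"
  shows "\<mu> = (\<lambda>i. of_nat i * (s / 2) ^ (i - 1))"
proof (rule recurrence_eqI[OF _ _ rec])
  define \<delta> where "\<delta> = s / 2"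
  have s: "s = 2 * \<delta>" and t: "t = - \<delta>\<^sup>2"
    using assms(4) by (simp_all add: \<delta>_def power2_eq_square field_simps)
  show "of_nat (n + 2) * (s / 2) ^ (n + 2 - 1) =
      s * (of_nat (n + 1) * (s / 2) ^ (n + 1 - 1)) + t * (of_nat n * (s / 2) ^ (n - 1))" for n
    by (cases n) (simp_all add: s t power2_eq_square algebra_simps)
qed (use assms(1,2) in simp_all)

lemma recurrence_complex_roots:
  fixes \<mu> :: "nat \<Rightarrow> real"
  assumes "\<mu> 0 = 0" "\<mu> 1 = 1" and rec: "\<And>n. \<mu> (n + 2) = s * \<mu> (n + 1) + t * \<mu> n"
    and "s\<^sup>2 + 4 * t < 0"
  obtains z where "z \<notin> \<real>" "\<mu> = (\<lambda>i. Im (z ^ i) / Im z)"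
proof
  define r where "r = sqrt (- (s\<^sup>2 + 4 * t))"
  have r: "r\<^sup>2 = - (s\<^sup>2 + 4 * t)" "r > 0" using assms(4) by (simp_all add: r_def)
  define z where "z = Complex (s / 2) (r / 2)"
  have root: "z\<^sup>2 = of_real s * z + of_real t"
    using r(1) by (simp add: z_def complex_eq_iff power2_eq_square field_simps)
  have Im_z: "Im z = r / 2" by (simp add: z_def)
  then show "z \<notin> \<real>" using r(2) by (simp add: complex_is_Real_iff)
  show "\<mu> = (\<lambda>i. Im (z ^ i) / Im z)"
  proof (rule recurrence_eqI[OF _ _ rec])
    show "Im (z ^ (n + 2)) / Im z = s * (Im (z ^ (n + 1)) / Im z) + t * (Im (z ^ n) / Im z)" for n
    proof -
      from power_recurrence[OF root, of n]
      have "Im (z ^ (n + 2)) = s * Im (z ^ (n + 1)) + t * Im (z ^ n)" by simp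
      then show ?thesis by (simp only: add_divide_distrib times_divide_eq_right)
    qed
  qed (use assms(1,2) Im_z r(2) in simp_all)
qed

lemma mult_closed_hyperplane_recurrence:
  assumes mc: "mult_closed (hyperplane \<mu>)" and "\<mu> 0 = 0" "\<mu> 1 = 1"
  shows "\<mu> (n + 2) = \<mu> 2 * \<mu> (n + 1) + (\<mu> 3 - (\<mu> 2)\<^sup>2) * \<mu> n"
proof -
  have in_H: "monom 1 i - monom (\<mu> i) 1 \<in> hyperplane \<mu>" for i
    using assms(3) by (simp add: hyperplane_eq coeff_pairing_diff coeff_pairing_monom)
  have "(monom 1 n - monom (\<mu> n) 1) * (monom 1 2 - monom (\<mu> 2) 1) =
      monom 1 (n + 2) - monom (\<mu> 2) (n + 1) - monom (\<mu> n) 3 + monom (\<mu> n * \<mu> 2) 2"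
    by (simp add: algebra_simps mult_monom numeral_3_eq_3 numeral_2_eq_2)
  moreover have "(monom 1 n - monom (\<mu> n) 1) * (monom 1 2 - monom (\<mu> 2) 1) \<in> hyperplane \<mu>"
    using mc in_H unfolding mult_closed_def by blast
  ultimately have "\<mu> (n + 2) - \<mu> 2 * \<mu> (n + 1) - \<mu> n * \<mu> 3 + \<mu> n * \<mu> 2 * \<mu> 2 = 0"
    by (simp add: hyperplane_eq coeff_pairing_add coeff_pairing_diff coeff_pairing_monom)
  then show ?thesis by (simp add: power2_eq_square algebra_simps)
qed

lemma mult_closed_hyperplane_cases:
  assumes mc: "mult_closed (hyperplane \<mu>)" and "\<mu> 0 = 0" "\<mu> 1 = 1"
  shows "(\<exists>\<beta> \<gamma>. \<beta> \<noteq> \<gamma> \<and> hyperplane \<mu> = H_two_points \<beta> \<gamma>) \<or>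
    (\<exists>\<delta>. hyperplane \<mu> = H_deriv \<delta>) \<or>
    (\<exists>z. z \<notin> \<real> \<and> hyperplane \<mu> = H_conj z)"
proof -
  define s t where "s = \<mu> 2" and "t = \<mu> 3 - (\<mu> 2)\<^sup>2"
  have rec: "\<mu> (n + 2) = s * \<mu> (n + 1) + t * \<mu> n" for n
    unfolding s_def t_def using mult_closed_hyperplane_recurrence[OF assms] .
  consider "s\<^sup>2 + 4 * t > 0" | "s\<^sup>2 + 4 * t = 0" | "s\<^sup>2 + 4 * t < 0" by linarith
  then show ?thesis
  proof cases
    case 1
    with recurrence_real_roots[OF assms(2,3) rec] hyperplane_power_diff show ?thesis by metis
  next
    case 2
    with recurrence_double_root[OF assms(2,3) rec] hyperplane_derivative_seq show ?thesis by metis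
  next
    case 3
    with recurrence_complex_roots[OF assms(2,3) rec] hyperplane_Im_power show ?thesis by metis
  qed
qed

theorem lemma4p13:
  shows "(\<forall>lam :: nat \<Rightarrow> real. lam 0 = 0 \<longrightarrow> lam 1 \<noteq> 0 \<longrightarrow>
            (mult_closed (hyperplane lam) \<longleftrightarrow>
               (\<exists>\<beta> \<gamma>. \<beta> \<noteq> \<gamma> \<and> hyperplane lam = H_two_points \<beta> \<gamma>) \<or>
               (\<exists>\<delta>. hyperplane lam = H_deriv \<delta>) \<or>
               (\<exists>z. z \<notin> \<real> \<and> hyperplane lam = H_conj z)))
       \<and> (\<forall>\<beta> \<gamma>. \<beta> \<noteq> \<gamma> \<longrightarrow>
            (\<exists>lam. lam 0 = 0 \<and> lam 1 \<noteq> 0 \<and> hyperplane lam = H_two_points \<beta> \<gamma>))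
       \<and> (\<forall>\<delta>. \<exists>lam. lam 0 = 0 \<and> lam 1 \<noteq> 0 \<and> hyperplane lam = H_deriv \<delta>)
       \<and> (\<forall>z. z \<notin> \<real> \<longrightarrow>
            (\<exists>lam. lam 0 = 0 \<and> lam 1 \<noteq> 0 \<and> hyperplane lam = H_conj z))"
proof (intro conjI allI impI)
  fix lam :: "nat \<Rightarrow> real"
  assume lam: "lam 0 = 0" "lam 1 \<noteq> 0"
  define \<mu> where "\<mu> i = lam i / lam 1" for i
  have "\<mu> 0 = 0" "\<mu> 1 = 1" using lam by (simp_all add: \<mu>_def)
  moreover have "hyperplane lam = hyperplane \<mu>"
    using hyperplane_divide[OF lam(2)] by (simp add: \<mu>_def[abs_def])
  ultimately show "mult_closed (hyperplane lam) \<longleftrightarrow>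
      (\<exists>\<beta> \<gamma>. \<beta> \<noteq> \<gamma> \<and> hyperplane lam = H_two_points \<beta> \<gamma>) \<or>
      (\<exists>\<delta>. hyperplane lam = H_deriv \<delta>) \<or>
      (\<exists>z. z \<notin> \<real> \<and> hyperplane lam = H_conj z)"
    using mult_closed_hyperplane_cases[of \<mu>]
      mult_closed_H_two_points mult_closed_H_deriv mult_closed_H_conj
    by metis
next
  fix \<beta> \<gamma> :: real
  assume "\<beta> \<noteq> \<gamma>"
  then show "\<exists>lam. lam 0 = 0 \<and> lam 1 \<noteq> 0 \<and> hyperplane lam = H_two_points \<beta> \<gamma>"
    by (intro exI[of _ "\<lambda>i. (\<beta> ^ i - \<gamma> ^ i) / (\<beta> - \<gamma>)"]) (simp add: hyperplane_power_diff)
next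
  fix \<delta> :: real
  show "\<exists>lam. lam 0 = 0 \<and> lam 1 \<noteq> 0 \<and> hyperplane lam = H_deriv \<delta>"
    using hyperplane_derivative_seq[of \<delta>] by (intro exI[of _ "\<lambda>i. of_nat i * \<delta> ^ (i - 1)"]) auto
next
  fix z :: complex
  assume "z \<notin> \<real>"
  then show "\<exists>lam. lam 0 = 0 \<and> lam 1 \<noteq> 0 \<and> hyperplane lam = H_conj z"
    by (intro exI[of _ "\<lambda>i. Im (z ^ i) / Im z"]) (simp add: hyperplane_Im_power complex_is_Real_iff)
qed

end
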